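(* Let $(M,\hat J,\hat\theta)$ be a pseudohermitian submanifold of $H_n$ of CR dimension $m$ with fundamental vector field $\nu$, and let $(e_1,\dots,e_{2n})$ be a Darboux frame over an open set $U\subset M$ with dual forms $\omega^1,\dots,\omega^{2n},\Theta$. Let $\hat e_j=e_j$, $\hat e_{m+j}=e_{n+j}$ ($1\le j\le m$), $\hat T=T+\nu$, and let $\{\hat\omega^1,\dots,\hat\omega^{2m},\hat\theta\}$ be the coframe on $U$ dual to $\{\hat e_1,\dots,\hat e_{2m},\hat T\}$. Then, for $1\le j\le m$ and $m+1\le a\le n$, $$\omega^j|_M=\hat\omega^j,\quad \omega^{n+j}|_M=\hat\omega^{m+j},\quad \omega^a|_M=\tfrac12\langle\nu,e_a\rangle\hat\theta,\quad \omega^{n+a}|_M=\tfrac12\langle\nu,e_{n+a}\rangle\hat\theta,$$ and hence, with $\theta^\beta=\omega^\beta+i\omega^{n+\beta}$, $\hat\theta^j=\hat\omega^j+i\hat\omega^{m+j}$ and $Z_a=\frac12(e_a-ie_{n+a})$, $$\theta^j|_M=\hat\theta^j,\qquad \theta^a|_M=\langle\nu,Z_a\rangle\hat\theta.$$ In particular, if $\nu=0$ then $\theta^a|_M=0$.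
   Context: $H_n$ is $\mathbb{R}^{2n+1}$ with coordinates $(x,y,t)$, $\Theta=dt+\sum_\beta(x_\beta dy_\beta-y_\beta dx_\beta)$, $\xi=\ker\Theta$ spanned by $\mathring e_\beta=\partial_{x_\beta}+y_\beta\partial_t$, $\mathring e_{n+\beta}=\partial_{y_\beta}-x_\beta\partial_t$; $J\mathring e_\beta=\mathring e_{n+\beta}$, $J\mathring e_{n+\beta}=-\mathring e_\beta$; $T=\partial_t$. The adapted metric makes $\mathring e_1,\dots,\mathring e_{2n},T$ orthonormal. The Levi metric on $\xi$ is $\langle X,Y\rangle=d\Theta(X,JY)$, extended to $\xi\otimes\mathbb C$ as a Hermitian form (complex-linear in the first slot, conjugate-linear in the second). A pseudohermitian submanifold of CR dimension $m$ is a $(2m+1)$-dimensional submanifold $M$ with $\hat\xi=TM\cap\xi$ of rank $2m$, $J$-invariant, and $(M,\hat J=J|_{\hat\xi},\hat\theta=\Theta|_M)$ pseudohermitian with $\ker\hat\theta=\hat\xi$. $\hat\xi^\perp$ is the orthogonal complement of $\hat\xi$ in $\xi|_M$; the fundamental vector field $\nu$ is the unique section of $\hat\xi^\perp$ with $T+\nu$ tangent to $M$. Indices: $1\le j\le m$, $m+1\le a\le n$, $1\le\beta\le n$. A Darboux frame over $U\subset M$ is a family of sections $e_1,\dots,e_{2n}$ of $\xi$ along $U$, orthonormal for the adapted metric, with $e_{n+\beta}=Je_\beta$, $e_j\in\hat\xi$, $e_a\in\hat\xi^\perp$; $\omega^1,\dots,\omega^{2n},\Theta$ denote the forms along $U$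 dual to $e_1,\dots,e_{2n},T$, and $\cdot|_M$ denotes pullback to $M$. *)

theory Defs
  imports "HOL-Analysis.Analysis"
begin

text \<open>A point (and a tangent vector) of H_n = R^(2n+1) is a triple (x,y,t) with
  x, y in R^n (indexed by the finite type 'n, n = CARD('n)) and t real.
  Tangent vectors are written in the same coordinates (dx, dy, dt).\<close>

type_synonym 'n pt = "(real^'n) \<times> (real^'n) \<times> real"

definition xc :: "'n::finite pt \<Rightarrow> real^'n" where "xc v = fst v"
definition yc :: "'n::finite pt \<Rightarrow> real^'n" where "yc v = fst (snd v)"
definition tc :: "'n::finite pt \<Rightarrow> real" where "tc v = snd (snd v)"

definition Theta :: "'n::finite pt \<Rightarrow> 'n pt \<Rightarrow> real" where
  "Theta p v = tc v + (\<Sum>b\<in>UNIV. xc p $ b * yc v $ b - yc p $ b * xc v $ b)"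

definition dTheta :: "'n::finite pt \<Rightarrow> 'n pt \<Rightarrow> real" where
  "dTheta X Y = 2 * (\<Sum>b\<in>UNIV. xc X $ b * yc Y $ b - yc X $ b * xc Y $ b)"

definition xi :: "'n::finite pt \<Rightarrow> 'n pt set" where
  "xi p = {v. Theta p v = 0}"

definition Tvec :: "'n::finite pt" where "Tvec = (0, 0, 1)"

definition e0x :: "'n::finite pt \<Rightarrow> 'n \<Rightarrow> 'n pt" where
  "e0x p b = (axis b 1, 0, yc p $ b)"
definition e0y :: "'n::finite pt \<Rightarrow> 'n \<Rightarrow> 'n pt" where
  "e0y p b = (0, axis b 1, - xc p $ b)"

text \<open>Complex structure J on xi_p: the linear map with J e0x = e0y, J e0y = - e0x.
  Written out: J(sum a_b e0x_b + c_b e0y_b) = sum a_b e0y_b - c_b e0x_b.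
  (The formula below is the unique linear extension that ignores the t-component;
  it is only used on vectors of xi_p.)\<close>
definition Jmap :: "'n::finite pt \<Rightarrow> 'n pt \<Rightarrow> 'n pt" where
  "Jmap p v = (- yc v, xc v, - (\<Sum>b\<in>UNIV. xc v $ b * xc p $ b + yc v $ b * yc p $ b))"

text \<open>Adapted metric at p: e0x_b, e0y_b, T orthonormal.  A vector v has
  coordinates (xc v, yc v) w.r.t. the e0x, e0y and Theta p v w.r.t. T.\<close>
definition gmet :: "'n::finite pt \<Rightarrow> 'n pt \<Rightarrow> 'n pt \<Rightarrow> real" where
  "gmet p v w = (\<Sum>b\<in>UNIV. xc v $ b * xc w $ b + yc v $ b * yc w $ b) + Theta p v * Theta p w"

text \<open>Levi metric <X,Y> = d Theta (X, J Y), and its Hermitian extension to the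
  complexification; a complex vector X1 + i X2 is represented by the pair (X1, X2).
  Complex-linear in the first slot, conjugate-linear in the second.\<close>
definition levi :: "'n::finite pt \<Rightarrow> 'n pt \<Rightarrow> 'n pt \<Rightarrow> real" where
  "levi p X Y = dTheta X (Jmap p Y)"

definition levi_c :: "'n::finite pt \<Rightarrow> 'n pt \<times> 'n pt \<Rightarrow> 'n pt \<times> 'n pt \<Rightarrow> complex" where
  "levi_c p X Y = Complex (levi p (fst X) (fst Y) + levi p (snd X) (snd Y))
                          (levi p (snd X) (fst Y) - levi p (fst X) (snd Y))"

definition submanifold_chart ::
  "'a::euclidean_space set \<Rightarrow> nat \<Rightarrow> 'a \<Rightarrow> 'a set \<Rightarrow> 'a set \<Rightarrow> 'a set
     \<Rightarrow> ('a \<Rightarrow> 'a) \<Rightarrow> ('a \<Rightarrow> 'a \<Rightarrow> 'a) \<Rightarrow> bool" where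
  "submanifold_chart M k p L D W phi phi' \<longleftrightarrow>
     subspace L \<and> dim L = k \<and> openin (top_of_set L) D \<and> open W \<and> p \<in> W \<and>
     (\<exists>psi. homeomorphism D (M \<inter> W) phi psi) \<and>
     (\<forall>x\<in>D. (phi has_derivative phi' x) (at x within D) \<and> inj_on (phi' x) L) \<and>
     (\<forall>v\<in>L. continuous_on D (\<lambda>x. phi' x v))"

definition is_submanifold :: "'a::euclidean_space set \<Rightarrow> nat \<Rightarrow> ('a \<Rightarrow> 'a set) \<Rightarrow> bool" where
  "is_submanifold M k TM \<longleftrightarrow>
     (\<forall>p\<in>M. \<exists>L D W phi phi' x. submanifold_chart M k p L D W phi phi' \<and>
          x \<in> D \<and> phi x = p \<and> TM p = phi' x ` L)"

definition hxi :: "('n::finite pt \<Rightarrow> 'n pt set) \<Rightarrow> 'n pt \<Rightarrow> 'n pt set" where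
  "hxi TM p = TM p \<inter> xi p"

definition hxi_perp :: "('n::finite pt \<Rightarrow> 'n pt set) \<Rightarrow> 'n pt \<Rightarrow> 'n pt set" where
  "hxi_perp TM p = {v \<in> xi p. \<forall>w\<in>hxi TM p. gmet p v w = 0}"

text \<open>(M, TM) is a pseudohermitian submanifold of H_n of CR dimension m.
  (That (M, J|, Theta|) is then pseudohermitian with ker = hxi is automatic.)\<close>
definition ph_submanifold :: "'n::finite pt set \<Rightarrow> ('n pt \<Rightarrow> 'n pt set) \<Rightarrow> nat \<Rightarrow> bool" where
  "ph_submanifold M TM m \<longleftrightarrow>
     is_submanifold M (2*m+1) TM \<and>
     (\<forall>p\<in>M. dim (hxi TM p) = 2*m \<and> (\<forall>v\<in>hxi TM p. Jmap p v \<in> hxi TM p))"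

definition fundamental_field ::
  "'n::finite pt set \<Rightarrow> ('n pt \<Rightarrow> 'n pt set) \<Rightarrow> ('n pt \<Rightarrow> 'n pt) \<Rightarrow> bool" where
  "fundamental_field M TM nu \<longleftrightarrow>
     (\<forall>p\<in>M. nu p \<in> hxi_perp TM p \<and> Tvec + nu p \<in> TM p)"

text \<open>Darboux frame e_1..e_2n over U (indices are natural numbers 1..2n, n = CARD('n)).\<close>
definition darboux_frame ::
  "('n::finite pt \<Rightarrow> 'n pt set) \<Rightarrow> nat \<Rightarrow> 'n pt set \<Rightarrow> (nat \<Rightarrow> 'n pt \<Rightarrow> 'n pt) \<Rightarrow> bool" where
  "darboux_frame TM m U e \<longleftrightarrow>
     (\<forall>p\<in>U.
        (\<forall>k\<in>{1..2*CARD('n)}. e k p \<in> xi p) \<and>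
        (\<forall>k\<in>{1..2*CARD('n)}. \<forall>l\<in>{1..2*CARD('n)}.
            gmet p (e k p) (e l p) = (if k = l then 1 else 0)) \<and>
        (\<forall>b\<in>{1..CARD('n)}. e (CARD('n) + b) p = Jmap p (e b p)) \<and>
        (\<forall>j\<in>{1..m}. e j p \<in> hxi TM p) \<and>
        (\<forall>a\<in>{m+1..CARD('n)}. e a p \<in> hxi_perp TM p))"

definition dual_forms ::
  "'n::finite pt set \<Rightarrow> (nat \<Rightarrow> 'n pt \<Rightarrow> 'n pt) \<Rightarrow> (nat \<Rightarrow> 'n pt \<Rightarrow> 'n pt \<Rightarrow> real) \<Rightarrow> bool" where
  "dual_forms U e \<omega> \<longleftrightarrow>
     (\<forall>p\<in>U. \<forall>k\<in>{1..2*CARD('n)}. linear (\<omega> k p) \<and>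
        (\<forall>l\<in>{1..2*CARD('n)}. \<omega> k p (e l p) = (if k = l then 1 else 0)) \<and>
        \<omega> k p Tvec = 0)"

definition ehat :: "nat \<Rightarrow> nat \<Rightarrow> (nat \<Rightarrow> 'n::finite pt \<Rightarrow> 'n pt) \<Rightarrow> nat \<Rightarrow> 'n pt \<Rightarrow> 'n pt" where
  "ehat n m e k p = (if k \<le> m then e k p else e (n + (k - m)) p)"

text \<open>hat omega^1..hat omega^2m, together with hat theta = Theta|_M, is the coframe on U
  dual to hat e_1..hat e_2m, hat T = T + nu: linear functionals on T_pM.\<close>
definition dual_hat_forms ::
  "('n::finite pt \<Rightarrow> 'n pt set) \<Rightarrow> nat \<Rightarrow> 'n pt set \<Rightarrow> (nat \<Rightarrow> 'n pt \<Rightarrow> 'n pt)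
     \<Rightarrow> ('n pt \<Rightarrow> 'n pt) \<Rightarrow> (nat \<Rightarrow> 'n pt \<Rightarrow> 'n pt \<Rightarrow> real) \<Rightarrow> bool" where
  "dual_hat_forms TM m U e nu \<omega>h \<longleftrightarrow>
     (\<forall>p\<in>U. \<forall>k\<in>{1..2*m}.
        (\<forall>u\<in>TM p. \<forall>w\<in>TM p. \<omega>h k p (u + w) = \<omega>h k p u + \<omega>h k p w) \<and>
        (\<forall>c. \<forall>u\<in>TM p. \<omega>h k p (c *\<^sub>R u) = c * \<omega>h k p u) \<and>
        (\<forall>l\<in>{1..2*m}. \<omega>h k p (ehat CARD('n) m e l p) = (if k = l then 1 else 0)) \<and>
        \<omega>h k p (Tvec + nu p) = 0)"

definition theta_c :: "nat \<Rightarrow> (nat \<Rightarrow> 'n::finite pt \<Rightarrow> 'n pt \<Rightarrow> real) \<Rightarrow> nat \<Rightarrow> 'n pt \<Rightarrow> 'n pt \<Rightarrow> complex" where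
  "theta_c n \<omega> b p v = Complex (\<omega> b p v) (\<omega> (n + b) p v)"

definition Zc :: "nat \<Rightarrow> (nat \<Rightarrow> 'n::finite pt \<Rightarrow> 'n pt) \<Rightarrow> nat \<Rightarrow> 'n pt \<Rightarrow> 'n pt \<times> 'n pt" where
  "Zc n e a p = ((1/2) *\<^sub>R e a p, - ((1/2) *\<^sub>R e (n + a) p))"

end

theory Submission
  imports Defs
begin

text \<open>Along M every tangent vector splits as v = w + Theta(v) (T + nu) with w in TM \<inter> xi.
  All forms involved are metric duals: omega^k = g(-, e_k) on all of H_n, and the hatted
  forms are g(-, e_k) on TM \<inter> xi, because the frames are orthonormal bases of xi and of
  TM \<inter> xi.  Evaluated on the splitting, the tangential e_j only see w, while the normal
  e_a, e_(n+a) are orthogonal to w and only see Theta(v) g(nu, e_a) = Theta(v) <nu, e_a> / 2.\<close>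

lemma additive_homogeneous_on_sum:
  assumes S: "subspace S"
    and add: "\<And>u w. u \<in> S \<Longrightarrow> w \<in> S \<Longrightarrow> h (u + w) = h u + h w"
    and scale: "\<And>c u. u \<in> S \<Longrightarrow> h (c *\<^sub>R u) = c * h u"
    and "finite A" and x: "\<And>l. l \<in> A \<Longrightarrow> x l \<in> S"
  shows "h (\<Sum>l\<in>A. c l *\<^sub>R x l) = (\<Sum>l\<in>A. c l * h (x l))"
  using \<open>finite A\<close> x
proof (induction A rule: finite_induct)
  case empty
  show ?case using scale[of 0 0] subspace_0[OF S] by simp
next
  case (insert a A)
  have "(\<Sum>l\<in>A. c l *\<^sub>R x l) \<in> S"
    using insert by (intro subspace_sum[OF S] subspace_scale[OF S]) auto
  then show ?case
    using insert add[OF subspace_scale[OF S insert(4)[of a]]] scale by simp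
qed

lemma orthonormal_expansion:
  fixes g :: "'a::euclidean_space \<Rightarrow> 'a \<Rightarrow> real" and f :: "'i \<Rightarrow> 'a"
  assumes lin: "\<And>y. linear (\<lambda>x. g x y)" and S: "subspace S"
    and "finite I" and dim_S: "dim S \<le> card I" and f: "f ` I \<subseteq> S"
    and orth: "\<And>k l. k \<in> I \<Longrightarrow> l \<in> I \<Longrightarrow> g (f k) (f l) = (if k = l then 1 else 0)"
    and w: "w \<in> S"
  shows "w = (\<Sum>l\<in>I. g w (f l) *\<^sub>R f l)"
proof -
  have coeff: "g (\<Sum>l\<in>I. c l *\<^sub>R f l) (f k) = c k" if "k \<in> I" for c k
  proof -
    have "g (\<Sum>l\<in>I. c l *\<^sub>R f l) (f k) = (\<Sum>l\<in>I. c l * (if l = k then 1 else 0))"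
      using that orth by (simp add: linear_sum[OF lin] linear_scale[OF lin])
    then show ?thesis using that \<open>finite I\<close> by (simp add: if_distrib cong: if_cong)
  qed
  have inj: "inj_on f I"
  proof (rule inj_onI)
    fix k l assume "k \<in> I" "l \<in> I" "f k = f l"
    then show "k = l" using orth[of k l] orth[of l l] by (auto split: if_splits)
  qed
  have fin: "finite (f ` I)" using \<open>finite I\<close> by simp
  have "independent (f ` I)"
  proof
    assume "dependent (f ` I)"
    then obtain u where u: "\<exists>v\<in>f ` I. u v \<noteq> 0" "(\<Sum>v\<in>f ` I. u v *\<^sub>R v) = 0"
      using dependent_finite[OF fin] by blast
    then have "(\<Sum>l\<in>I. u (f l) *\<^sub>R f l) = 0"
      using sum.reindex[OF inj, of "\<lambda>v. u v *\<^sub>R v"] by simp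
    then have "u (f k) = 0" if "k \<in> I" for k
      using coeff[OF that, of "u \<circ> f"] linear_0[OF lin] by simp
    then show False using u(1) by auto
  qed
  then have "S \<subseteq> span (f ` I)"
    using f dim_S card_image[OF inj] by (intro card_ge_dim_independent) auto
  then obtain u where "w = (\<Sum>v\<in>f ` I. u v *\<^sub>R v)"
    using w span_finite[OF fin] by blast
  then have w_eq: "w = (\<Sum>l\<in>I. u (f l) *\<^sub>R f l)"
    using sum.reindex[OF inj, of "\<lambda>v. u v *\<^sub>R v"] by simp
  have "g w (f l) = u (f l)" if "l \<in> I" for l
    using coeff[OF that, of "u \<circ> f"] w_eq by simp
  then show ?thesis by (subst (1) w_eq) (intro sum.cong; simp)
qed
lemma dual_functional_eq:
  fixes g :: "'a::euclidean_space \<Rightarrow> 'a \<Rightarrow> real" and f :: "'i \<Rightarrow> 'a"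
  assumes lin: "\<And>y. linear (\<lambda>x. g x y)" and S: "subspace S"
    and "finite I" and dim_S: "dim S \<le> card I" and f: "f ` I \<subseteq> S"
    and orth: "\<And>k l. k \<in> I \<Longrightarrow> l \<in> I \<Longrightarrow> g (f k) (f l) = (if k = l then 1 else 0)"
    and add: "\<And>u w. u \<in> S \<Longrightarrow> w \<in> S \<Longrightarrow> h (u + w) = h u + h w"
    and scale: "\<And>c u. u \<in> S \<Longrightarrow> h (c *\<^sub>R u) = c * h u"
    and dual: "\<And>l. l \<in> I \<Longrightarrow> h (f l) = (if k = l then 1 else 0)"
    and "k \<in> I" and w: "w \<in> S"
  shows "h w = g w (f k)"
proof -
  have f_S: "\<And>l. l \<in> I \<Longrightarrow> f l \<in> S" using f by blast
  have "h w = h (\<Sum>l\<in>I. g w (f l) *\<^sub>R f l)"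
    using orthonormal_expansion[OF lin S \<open>finite I\<close> dim_S f orth w] by (rule arg_cong)
  also have "\<dots> = (\<Sum>l\<in>I. g w (f l) * h (f l))"
    by (rule additive_homogeneous_on_sum[OF S add scale \<open>finite I\<close> f_S])
  also have "\<dots> = (\<Sum>l\<in>I. if k = l then g w (f l) else 0)"
    using dual by (intro sum.cong) auto
  also have "\<dots> = g w (f k)"
    using \<open>finite I\<close> \<open>k \<in> I\<close> by simp
  finally show ?thesis .
qed

lemma is_submanifold_subspace_tangent:
  assumes "is_submanifold M k TM" and "p \<in> M"
  shows "subspace (TM p)"
proof -
  obtain L D W phi phi' x where chart: "submanifold_chart M k p L D W phi phi'"
      and "x \<in> D" and TM_p: "TM p = phi' x ` L"
    using assms unfolding is_submanifold_def by blast
  then have "linear (phi' x)"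
    unfolding submanifold_chart_def using has_derivative_linear by blast
  then show ?thesis
    using chart TM_p linear_subspace_image unfolding submanifold_chart_def by auto
qed

lemma xc_add [simp]: "xc (u + w) = xc u + xc w"
  and xc_scaleR [simp]: "xc (c *\<^sub>R u) = c *\<^sub>R xc u"
  and xc_minus [simp]: "xc (- u) = - xc u"
  and xc_zero [simp]: "xc 0 = 0"
  and xc_Tvec [simp]: "xc Tvec = 0"
  and yc_add [simp]: "yc (u + w) = yc u + yc w"
  and yc_scaleR [simp]: "yc (c *\<^sub>R u) = c *\<^sub>R yc u"
  and yc_minus [simp]: "yc (- u) = - yc u"
  and yc_zero [simp]: "yc 0 = 0"
  and yc_Tvec [simp]: "yc Tvec = 0"
  and tc_add [simp]: "tc (u + w) = tc u + tc w"
  and tc_scaleR [simp]: "tc (c *\<^sub>R u) = c *\<^sub>R tc u"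
  and tc_Tvec [simp]: "tc Tvec = 1"
  by (auto simp: xc_def yc_def tc_def Tvec_def)

lemma linear_Theta: "linear (Theta p)"
  by (rule linearI)
    (simp_all add: Theta_def algebra_simps sum.distrib sum_subtractf sum_distrib_left)

lemma Theta_Tvec [simp]: "Theta p Tvec = 1"
  by (simp add: Theta_def)

lemma linear_gmet: "linear (\<lambda>v. gmet p v w)"
  by (rule linearI)
    (simp_all add: gmet_def linear_add[OF linear_Theta] linear_scale[OF linear_Theta]
       algebra_simps sum.distrib sum_distrib_left)

lemma gmet_Tvec: "gmet p Tvec w = Theta p w"
  by (simp add: gmet_def)

lemma levi_eq: "levi p X Y = 2 * (\<Sum>b\<in>UNIV. xc X $ b * xc Y $ b + yc X $ b * yc Y $ b)"
  by (simp add: levi_def dTheta_def Jmap_def xc_def yc_def)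

lemma gmet_eq_half_levi: "Theta p X = 0 \<Longrightarrow> gmet p X Y = 1/2 * levi p X Y"
  by (simp add: gmet_def levi_eq)

lemma levi_scaleR_right: "levi p X (c *\<^sub>R Y) = c * levi p X Y"
  by (simp add: levi_eq sum_distrib_left algebra_simps)

lemma levi_minus_right: "levi p X (- Y) = - levi p X Y"
  by (simp add: levi_eq sum_negf[symmetric] algebra_simps)

lemma levi_zero_left: "levi p 0 Y = 0"
  by (simp add: levi_eq)

lemma levi_c_Zc:
  "levi_c p (X, 0) (Zc n e a p) = Complex (1/2 * levi p X (e a p)) (1/2 * levi p X (e (n + a) p))"
  by (simp add: levi_c_def Zc_def levi_scaleR_right levi_minus_right levi_zero_left)

lemma subspace_xi: "subspace (xi p)"
  unfolding xi_def subspace_def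
  by (simp add: linear_add[OF linear_Theta] linear_scale[OF linear_Theta] linear_0[OF linear_Theta])

lemma dim_xi_le: "dim (xi p) \<le> 2 * CARD('n)"
  for p :: "'n::finite pt"
proof (rule ccontr)
  assume "\<not> dim (xi p) \<le> 2 * CARD('n)"
  moreover have "dim (xi p) \<le> DIM('n pt)" by (rule dim_subset_UNIV)
  ultimately have "dim (xi p) = DIM('n pt)" by simp
  then have "span (xi p) = UNIV" by (rule dim_eq_full[THEN iffD1])
  then have "Tvec \<in> xi p" using span_eq_iff subspace_xi by blast
  then show False by (simp add: xi_def)
qed

locale darboux_point =
  fixes M U :: "'n::finite pt set"
    and TM :: "'n pt \<Rightarrow> 'n pt set"
    and nu :: "'n pt \<Rightarrow> 'n pt"
    and e :: "nat \<Rightarrow> 'n pt \<Rightarrow> 'n pt"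
    and \<omega> \<omega>h :: "nat \<Rightarrow> 'n pt \<Rightarrow> 'n pt \<Rightarrow> real"
    and n m :: nat and p :: "'n pt"
  assumes n_def: "n = CARD('n)"
    and ph: "ph_submanifold M TM m"
    and nu: "fundamental_field M TM nu"
    and frame: "darboux_frame TM m U e"
    and omega: "dual_forms U e \<omega>"
    and omegah: "dual_hat_forms TM m U e nu \<omega>h"
    and U_sub: "U \<subseteq> M"
    and p_in: "p \<in> U"
begin

lemma p_in_M: "p \<in> M"
  using U_sub p_in by blast

lemma subspace_TM: "subspace (TM p)"
  using ph p_in_M by (auto simp: ph_submanifold_def intro: is_submanifold_subspace_tangent)

lemma subspace_hxi: "subspace (hxi TM p)"
  unfolding hxi_def by (intro subspace_inter subspace_TM subspace_xi)

lemma dim_hxi: "dim (hxi TM p) = 2 * m"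
  and Jmap_hxi: "u \<in> hxi TM p \<Longrightarrow> Jmap p u \<in> hxi TM p"
  using ph p_in_M by (auto simp: ph_submanifold_def)

lemma cr_dim_le: "m \<le> n"
  using dim_subset_UNIV[of "hxi TM p"] dim_hxi n_def by simp

lemma e_xi: "k \<in> {1..2*n} \<Longrightarrow> e k p \<in> xi p"
  and e_orthonormal: "k \<in> {1..2*n} \<Longrightarrow> l \<in> {1..2*n} \<Longrightarrow>
        gmet p (e k p) (e l p) = (if k = l then 1 else 0)"
  and e_Jmap: "b \<in> {1..n} \<Longrightarrow> e (n + b) p = Jmap p (e b p)"
  and e_hxi: "j \<in> {1..m} \<Longrightarrow> e j p \<in> hxi TM p"
  using frame p_in unfolding darboux_frame_def n_def by auto

lemma nu_hxi_perp: "nu p \<in> hxi_perp TM p"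
  and Tvec_nu_TM: "Tvec + nu p \<in> TM p"
  using nu p_in_M unfolding fundamental_field_def by auto

lemma Theta_nu: "Theta p (nu p) = 0"
  using nu_hxi_perp by (simp add: hxi_perp_def xi_def)

lemma omega_linear: "k \<in> {1..2*n} \<Longrightarrow> linear (\<omega> k p)"
  and omega_dual: "k \<in> {1..2*n} \<Longrightarrow> l \<in> {1..2*n} \<Longrightarrow>
        \<omega> k p (e l p) = (if k = l then 1 else 0)"
  and omega_Tvec: "k \<in> {1..2*n} \<Longrightarrow> \<omega> k p Tvec = 0"
  using omega p_in unfolding dual_forms_def n_def by auto

lemma omegah_add: "k \<in> {1..2*m} \<Longrightarrow> u \<in> TM p \<Longrightarrow> w \<in> TM p \<Longrightarrow>
        \<omega>h k p (u + w) = \<omega>h k p u + \<omega>h k p w"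
  and omegah_scale: "k \<in> {1..2*m} \<Longrightarrow> u \<in> TM p \<Longrightarrow> \<omega>h k p (c *\<^sub>R u) = c * \<omega>h k p u"
  and omegah_dual: "k \<in> {1..2*m} \<Longrightarrow> l \<in> {1..2*m} \<Longrightarrow>
        \<omega>h k p (ehat n m e l p) = (if k = l then 1 else 0)"
  and omegah_Tvec_nu: "k \<in> {1..2*m} \<Longrightarrow> \<omega>h k p (Tvec + nu p) = 0"
  using omegah p_in unfolding dual_hat_forms_def n_def by auto

lemma omega_eq_gmet:
  assumes k: "k \<in> {1..2*n}"
  shows "\<omega> k p v = gmet p v (e k p)"
proof -
  note lin = omega_linear[OF k]
  define u where "u = v - Theta p v *\<^sub>R Tvec"
  have u_xi: "u \<in> xi p"
    by (simp add: u_def xi_def linear_diff[OF linear_Theta] linear_scale[OF linear_Theta])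
  have "\<omega> k p u = gmet p u (e k p)"
    using e_xi e_orthonormal lin k u_xi
    by (intro dual_functional_eq[where I="{1..2*n}", OF linear_gmet subspace_xi] omega_dual)
      (auto simp: dim_xi_le n_def linear_add linear_scale)
  moreover have "\<omega> k p u = \<omega> k p v" and "gmet p u (e k p) = gmet p v (e k p)"
    using omega_Tvec[OF k] e_xi[OF k]
    by (simp_all add: u_def linear_diff[OF lin] linear_scale[OF lin] linear_diff[OF linear_gmet]
        linear_scale[OF linear_gmet] gmet_Tvec xi_def)
  ultimately show ?thesis by simp
qed

definition hat_index :: "nat \<Rightarrow> nat" where
  "hat_index l = (if l \<le> m then l else n + (l - m))"

lemma ehat_eq_e_hat_index: "ehat n m e l p = e (hat_index l) p"
  by (simp add: ehat_def hat_index_def)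

lemma hat_index_range: "l \<in> {1..2*m} \<Longrightarrow> hat_index l \<in> {1..2*n}"
  using cr_dim_le by (auto simp: hat_index_def)

lemma hat_index_inj:
  "k \<in> {1..2*m} \<Longrightarrow> l \<in> {1..2*m} \<Longrightarrow> hat_index k = hat_index l \<longleftrightarrow> k = l"
  using cr_dim_le by (auto simp: hat_index_def)

lemma ehat_hxi:
  assumes l: "l \<in> {1..2*m}"
  shows "ehat n m e l p \<in> hxi TM p"
proof (cases "l \<le> m")
  case False
  then have "l - m \<in> {1..m}" "l - m \<in> {1..n}" using l cr_dim_le by auto
  moreover have "ehat n m e l p = e (n + (l - m)) p"
    unfolding ehat_def using False by (simp only: if_False)
  ultimately show ?thesis using e_Jmap e_hxi Jmap_hxi by metis
qed (use l e_hxi in \<open>simp add: ehat_def\<close>)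

lemma ehat_orthonormal:
  assumes k: "k \<in> {1..2*m}" and l: "l \<in> {1..2*m}"
  shows "gmet p (ehat n m e k p) (ehat n m e l p) = (if k = l then 1 else 0)"
  using e_orthonormal[OF hat_index_range[OF k] hat_index_range[OF l]] hat_index_inj[OF k l]
  by (simp add: ehat_eq_e_hat_index)

lemma omegah_eq_gmet:
  assumes k: "k \<in> {1..2*m}" and w: "w \<in> hxi TM p"
  shows "\<omega>h k p w = gmet p w (ehat n m e k p)"
proof (rule dual_functional_eq[where I="{1..2*m}", OF linear_gmet subspace_hxi])
  show "dim (hxi TM p) \<le> card {1..2*m}" using dim_hxi by simp
  show "(\<lambda>l. ehat n m e l p) ` {1..2*m} \<subseteq> hxi TM p" using ehat_hxi by blast
  show "\<omega>h k p (u + w) = \<omega>h k p u + \<omega>h k p w" "\<omega>h k p (c *\<^sub>R u) = c * \<omega>h k p u"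
    if "u \<in> hxi TM p" "w \<in> hxi TM p" for u w c
    using that k omegah_add omegah_scale by (auto simp: hxi_def)
qed (use k w ehat_orthonormal omegah_dual in auto)

lemma tangent_split:
  assumes v: "v \<in> TM p"
  shows "v - Theta p v *\<^sub>R (Tvec + nu p) \<in> hxi TM p"
  using v Tvec_nu_TM subspace_TM Theta_nu
  by (simp add: hxi_def xi_def subspace_diff subspace_scale linear_diff[OF linear_Theta]
      linear_scale[OF linear_Theta] linear_add[OF linear_Theta])

lemma omegah_tangent:
  assumes k: "k \<in> {1..2*m}" and v: "v \<in> TM p"
  shows "\<omega>h k p v = gmet p (v - Theta p v *\<^sub>R (Tvec + nu p)) (ehat n m e k p)"
proof -
  let ?w = "v - Theta p v *\<^sub>R (Tvec + nu p)"
  have "?w \<in> TM p" using tangent_split[OF v] by (simp add: hxi_def)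
  moreover have "Theta p v *\<^sub>R (Tvec + nu p) \<in> TM p"
    using Tvec_nu_TM subspace_TM by (simp add: subspace_scale)
  ultimately have "\<omega>h k p (?w + Theta p v *\<^sub>R (Tvec + nu p))
      = \<omega>h k p ?w + \<omega>h k p (Theta p v *\<^sub>R (Tvec + nu p))"
    by (rule omegah_add[OF k])
  then show ?thesis
    using omegah_scale[OF k Tvec_nu_TM] omegah_Tvec_nu[OF k] omegah_eq_gmet[OF k tangent_split[OF v]]
    by simp
qed

lemma omega_tangent:
  assumes k: "k \<in> {1..2*n}"
  shows "\<omega> k p v = gmet p (v - Theta p v *\<^sub>R (Tvec + nu p)) (e k p)
                   + Theta p v * gmet p (nu p) (e k p)"
  using e_xi[OF k]
  by (simp add: omega_eq_gmet[OF k] linear_diff[OF linear_gmet] linear_add[OF linear_gmet]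
      linear_scale[OF linear_gmet] gmet_Tvec xi_def)

lemma omega_tangential:
  assumes j: "j \<in> {1..m}" and v: "v \<in> TM p"
  shows "\<omega> j p v = \<omega>h j p v" and "\<omega> (n + j) p v = \<omega>h (m + j) p v"
proof -
  have nu_orth: "gmet p (nu p) u = 0" if "u \<in> hxi TM p" for u
    using nu_hxi_perp that by (simp add: hxi_perp_def)
  have "e (n + j) p \<in> hxi TM p"
    using e_Jmap[of j] Jmap_hxi e_hxi j cr_dim_le by auto
  moreover have "j \<in> {1..2*n}" "n + j \<in> {1..2*n}" "j \<in> {1..2*m}" "m + j \<in> {1..2*m}"
    using j cr_dim_le by auto
  moreover have "ehat n m e j p = e j p" "ehat n m e (m + j) p = e (n + j) p"
    using j by (simp_all add: ehat_def)
  ultimately show "\<omega> j p v = \<omega>h j p v" and "\<omega> (n + j) p v = \<omega>h (m + j) p v"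
    using nu_orth e_hxi[OF j] omega_tangent omegah_tangent[OF _ v] by simp_all
qed

text \<open>Orthonormality of the frame alone makes e_a and e_(n+a) orthogonal to TM \<inter> xi.\<close>

lemma hxi_orthogonal_normal_e:
  assumes w: "w \<in> hxi TM p" and k: "k \<in> {m<..n} \<union> {n+m<..2*n}"
  shows "gmet p w (e k p) = 0"
proof -
  have w_eq: "w = (\<Sum>l\<in>{1..2*m}. gmet p w (ehat n m e l p) *\<^sub>R ehat n m e l p)"
    using ehat_hxi ehat_orthonormal dim_hxi w
    by (intro orthonormal_expansion[OF linear_gmet subspace_hxi]) auto
  have orth: "gmet p (ehat n m e l p) (e k p) = 0" if "l \<in> {1..2*m}" for l
  proof -
    have "hat_index l \<noteq> k" using that k by (auto simp: hat_index_def)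
    then show ?thesis
      using that k hat_index_range e_orthonormal by (auto simp: ehat_eq_e_hat_index)
  qed
  have "gmet p w (e k p)
      = gmet p (\<Sum>l\<in>{1..2*m}. gmet p w (ehat n m e l p) *\<^sub>R ehat n m e l p) (e k p)"
    using w_eq by (rule arg_cong)
  also have "\<dots> = 0"
    by (simp add: linear_sum[OF linear_gmet] linear_scale[OF linear_gmet] orth)
  finally show ?thesis .
qed

lemma omega_normal:
  assumes a: "a \<in> {m+1..n}" and v: "v \<in> TM p"
  shows "\<omega> a p v = 1/2 * levi p (nu p) (e a p) * Theta p v"
    and "\<omega> (n + a) p v = 1/2 * levi p (nu p) (e (n + a) p) * Theta p v"
proof -
  have "a \<in> {1..2*n}" "n + a \<in> {1..2*n}" "a \<in> {m<..n} \<union> {n+m<..2*n}"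
      "n + a \<in> {m<..n} \<union> {n+m<..2*n}"
    using a by auto
  then show "\<omega> a p v = 1/2 * levi p (nu p) (e a p) * Theta p v"
    and "\<omega> (n + a) p v = 1/2 * levi p (nu p) (e (n + a) p) * Theta p v"
    using hxi_orthogonal_normal_e[OF tangent_split[OF v]] omega_tangent
      gmet_eq_half_levi[OF Theta_nu] by simp_all
qed

end

theorem proposition3p2:
  fixes M U :: "'n::finite pt set"
    and TM :: "'n pt \<Rightarrow> 'n pt set"
    and nu :: "'n pt \<Rightarrow> 'n pt"
    and e :: "nat \<Rightarrow> 'n pt \<Rightarrow> 'n pt"
    and \<omega> \<omega>h :: "nat \<Rightarrow> 'n pt \<Rightarrow> 'n pt \<Rightarrow> real"
    and n m :: nat
  assumes n_def: "n = CARD('n)"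
    and ph: "ph_submanifold M TM m"
    and nu: "fundamental_field M TM nu"
    and U: "openin (top_of_set M) U"
    and frame: "darboux_frame TM m U e"
    and omega: "dual_forms U e \<omega>"
    and omegah: "dual_hat_forms TM m U e nu \<omega>h"
  shows "\<forall>p\<in>U. \<forall>v\<in>TM p.
           (\<forall>j\<in>{1..m}. \<omega> j p v = \<omega>h j p v \<and> \<omega> (n + j) p v = \<omega>h (m + j) p v) \<and>
           (\<forall>a\<in>{m+1..n}.
               \<omega> a p v = 1/2 * levi p (nu p) (e a p) * Theta p v \<and>
               \<omega> (n + a) p v = 1/2 * levi p (nu p) (e (n + a) p) * Theta p v) \<and>
           (\<forall>j\<in>{1..m}. theta_c n \<omega> j p v = Complex (\<omega>h j p v) (\<omega>h (m + j) p v)) \<and>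
           (\<forall>a\<in>{m+1..n}. theta_c n \<omega> a p v
                 = levi_c p (nu p, 0) (Zc n e a p) * complex_of_real (Theta p v)) \<and>
           (nu p = 0 \<longrightarrow> (\<forall>a\<in>{m+1..n}. theta_c n \<omega> a p v = 0))"
proof -
  have at_point: "darboux_point M U TM nu e \<omega> \<omega>h n m p" if "p \<in> U" for p
    using n_def ph nu frame omega omegah openin_imp_subset[OF U] that by unfold_locales
  show ?thesis
    by (simp add: darboux_point.omega_tangential[OF at_point]
        darboux_point.omega_normal[OF at_point] theta_c_def levi_c_Zc levi_zero_left complex_eq_iff)
qed

end
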